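(* Let $f(t)\neq 0$ be a Castelnuovo polynomial with $d=\deg f(t)>0$, and let $f^{\ast}(t)=f(t)-t^{d-1}-t^{d}$. If $f^{\ast}(t)$ is not a Castelnuovo polynomial, then \[f(t)=1+2t+3t^2+\dots+(u+1)t^u\] for some integer $u>0$.
   Context: $\mathbb{N}=\{0,1,2,\dots\}$. A function $s:\mathbb{Z}\to\mathbb{C}$ is identified with its generating function $\sum_n s(n)t^n$. A Castelnuovo function is a finitely supported function $s:\mathbb{N}\to\mathbb{N}$ such that for some integer $\sigma\ge 0$, $s(0)=1,s(1)=2,\dots,s(\sigma-1)=\sigma$ and $s(\sigma-1)\ge s(\sigma)\ge s(\sigma+1)\ge\dots\ge 0$ (with the convention $s(-1)=0$ when $\sigma=0$); a Castelnuovo polynomial is the generating function $\sum_n s(n)t^n$ of a Castelnuovo function. *)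

theory Defs
  imports "HOL-Computational_Algebra.Polynomial"
begin

text \<open>A Castelnuovo function, viewed as an integer-valued function on the naturals
  (so that it can be compared with arbitrary integer coefficient sequences):
  finitely supported, values in N, s(n) = n+1 for n < sigma, and non-increasing
  from index sigma-1 on (with the convention s(-1) = 0 when sigma = 0).\<close>
definition castelnuovo_fun :: "(nat \<Rightarrow> int) \<Rightarrow> bool" where
  "castelnuovo_fun s \<longleftrightarrow>
     finite {n. s n \<noteq> 0} \<and> (\<forall>n. 0 \<le> s n) \<and>
     (\<exists>\<sigma>::nat. (\<forall>n<\<sigma>. s n = int n + 1) \<and>
        s \<sigma> \<le> (if \<sigma> = 0 then 0 else s (\<sigma> - 1)) \<and>
        (\<forall>n\<ge>\<sigma>. s (Suc n) \<le> s n))"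

definition castelnuovo_poly :: "int poly \<Rightarrow> bool" where
  "castelnuovo_poly f \<longleftrightarrow> castelnuovo_fun (coeff f)"

end

theory Submission
  imports Defs
begin

text \<open>If the increasing part of a Castelnuovo function ends at \<sigma> \<le> d = deg f, then lowering the
  coefficients of t^(d-1) and t^d by one keeps the function Castelnuovo, with the increasing part
  shortened to min \<sigma> (d - 1). So if f - t^(d-1) - t^d is not Castelnuovo, then \<sigma> > d, i.e. every
  coefficient of f is forced to be i + 1 up to the degree.\<close>

definition castelnuovo_shape :: "(nat \<Rightarrow> int) \<Rightarrow> nat \<Rightarrow> bool" where
  "castelnuovo_shape s \<sigma> \<longleftrightarrow>
     (\<forall>n<\<sigma>. s n = int n + 1) \<and>
     s \<sigma> \<le> (if \<sigma> = 0 then 0 else s (\<sigma> - 1)) \<and>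
     (\<forall>n\<ge>\<sigma>. s (Suc n) \<le> s n)"

lemma castelnuovo_fun_iff_shape:
  "castelnuovo_fun s \<longleftrightarrow>
     finite {n. s n \<noteq> 0} \<and> (\<forall>n. 0 \<le> s n) \<and> (\<exists>\<sigma>. castelnuovo_shape s \<sigma>)"
  unfolding castelnuovo_fun_def castelnuovo_shape_def by blast

lemma castelnuovo_shape_antimono:
  assumes "castelnuovo_shape s \<sigma>" "\<sigma> \<le> i" "i \<le> j"
  shows "s j \<le> s i"
  using assms(3)
proof (induction j rule: dec_induct)
  case (step k)
  with assms(1,2) show ?case
    unfolding castelnuovo_shape_def by (meson order.trans)
qed simp

lemma castelnuovo_shape_step_down:
  assumes "castelnuovo_shape s \<sigma>" "0 < \<sigma>" "\<sigma> - 1 \<le> i"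
  shows "s (Suc i) \<le> s i"
proof (cases "\<sigma> \<le> i")
  case False
  with assms(3) have "i = \<sigma> - 1" by simp
  with assms(1,2) show ?thesis unfolding castelnuovo_shape_def by auto
qed (use assms(1) in \<open>simp add: castelnuovo_shape_def\<close>)

lemma castelnuovo_shape_0_nonpos:
  assumes "castelnuovo_shape s 0"
  shows "s n \<le> 0"
proof -
  have "s n \<le> s 0" using castelnuovo_shape_antimono[OF assms] by simp
  also have "s 0 \<le> 0" using assms unfolding castelnuovo_shape_def by simp
  finally show ?thesis .
qed

lemma castelnuovo_shape_drop_top_two:
  assumes shape: "castelnuovo_shape s \<sigma>" and "0 < \<sigma>" "\<sigma> \<le> d"
    and top: "0 < s d" and vanish: "\<forall>n>d. s n = 0"
  shows "castelnuovo_shape (\<lambda>n. s n - of_bool (n = d - 1) - of_bool (n = d)) (min \<sigma> (d - 1))"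
    (is "castelnuovo_shape ?t ?\<tau>")
proof -
  from shape have incr: "\<And>n. n < \<sigma> \<Longrightarrow> s n = int n + 1"
    and decr: "\<And>n. \<sigma> \<le> n \<Longrightarrow> s (Suc n) \<le> s n"
    unfolding castelnuovo_shape_def by auto
  have "\<forall>n<?\<tau>. ?t n = int n + 1"
    using incr by auto
  moreover have "?t ?\<tau> \<le> (if ?\<tau> = 0 then 0 else ?t (?\<tau> - 1))"
  proof (cases "\<sigma> < d")
    case True
    with shape \<open>0 < \<sigma>\<close> show ?thesis
      unfolding castelnuovo_shape_def by (auto simp: min_def)
  next
    case False
    with \<open>\<sigma> \<le> d\<close> have "\<sigma> = d" by simp
    with incr \<open>0 < \<sigma>\<close> show ?thesis
      by (cases "d = 1") (auto simp: min_def)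
  qed
  moreover have "\<forall>n\<ge>?\<tau>. ?t (Suc n) \<le> ?t n"
  proof (intro allI impI)
    fix n assume "?\<tau> \<le> n"
    then consider "n = d - 1" | "d \<le> n" | "\<sigma> \<le> n" "n < d - 1"
      by linarith
    then show "?t (Suc n) \<le> ?t n"
    proof cases
      case 1
      with castelnuovo_shape_step_down[OF shape \<open>0 < \<sigma>\<close>, of n] \<open>\<sigma> \<le> d\<close> \<open>0 < \<sigma>\<close>
      show ?thesis by auto
    next
      case 2
      with vanish top \<open>0 < \<sigma>\<close> \<open>\<sigma> \<le> d\<close> show ?thesis by (cases "n = d") auto
    next
      case 3
      with decr[of n] show ?thesis by auto
    qed
  qed
  ultimately show ?thesis unfolding castelnuovo_shape_def by blast
qed

lemma coeff_minus_monoms_top_two: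
  "coeff (f - monom 1 (d - 1) - monom 1 d) n = coeff f n - of_bool (n = d - 1) - of_bool (n = d)"
  by (auto simp: coeff_diff coeff_monom)

lemma castelnuovo_poly_drop_top_two:
  fixes f :: "int poly"
  assumes "castelnuovo_poly f" "castelnuovo_shape (coeff f) \<sigma>" "0 < \<sigma>" "\<sigma> \<le> degree f"
    "f \<noteq> 0"
  shows "castelnuovo_poly (f - monom 1 (degree f - 1) - monom 1 (degree f))"
proof -
  define d where "d = degree f"
  define t where "t = coeff (f - monom 1 (d - 1) - monom 1 d)"
  have t_eq: "t n = coeff f n - of_bool (n = d - 1) - of_bool (n = d)" for n
    unfolding t_def by (rule coeff_minus_monoms_top_two)
  have "0 < d" using assms(3,4) unfolding d_def by linarith
  have nonneg: "0 \<le> coeff f n" for n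
    using assms(1) unfolding castelnuovo_poly_def castelnuovo_fun_def by blast
  have top: "0 < coeff f d"
    using nonneg[of d] assms(5) unfolding d_def by (simp add: order_less_le)
  have vanish: "\<forall>n>d. coeff f n = 0"
    unfolding d_def by (simp add: coeff_eq_0)
  have below_top: "coeff f d \<le> coeff f (d - 1)"
    using castelnuovo_shape_step_down[OF assms(2,3), of "d - 1"] assms(4) \<open>0 < d\<close>
    unfolding d_def by simp
  have "castelnuovo_shape t (min \<sigma> (d - 1))"
    unfolding t_eq[abs_def]
    using castelnuovo_shape_drop_top_two[OF assms(2,3) assms(4)[folded d_def] top vanish] .
  moreover have "0 \<le> t n" for n
    using t_eq[of n] nonneg[of n] top below_top \<open>0 < d\<close> by auto
  moreover have "finite {n. t n \<noteq> 0}"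
    by (rule finite_subset[of _ "{..d}"]) (use t_eq vanish in \<open>auto simp: not_le[symmetric]\<close>)
  ultimately show ?thesis
    unfolding castelnuovo_poly_def castelnuovo_fun_iff_shape t_def d_def by blast
qed

lemma coeff_sum_monom_succ:
  "coeff (\<Sum>i\<le>u. monom (int i + 1) i) n = (if n \<le> u then int n + 1 else 0)"
  by (simp add: coeff_sum coeff_monom sum.delta)

lemma castelnuovo_shape_beyond_degree_imp_eq_sum_monom:
  fixes f :: "int poly"
  assumes "castelnuovo_shape (coeff f) \<sigma>" "degree f < \<sigma>"
  shows "f = (\<Sum>i\<le>degree f. monom (int i + 1) i)"
proof (rule poly_eqI)
  fix n
  show "coeff f n = coeff (\<Sum>i\<le>degree f. monom (int i + 1) i) n"
    using assms coeff_eq_0[of f n]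
    by (auto simp: coeff_sum_monom_succ castelnuovo_shape_def)
qed

theorem lemma3:
  fixes f :: "int poly"
  assumes "f \<noteq> 0" and "castelnuovo_poly f" and "degree f > 0"
    and "\<not> castelnuovo_poly (f - monom 1 (degree f - 1) - monom 1 (degree f))"
  shows "\<exists>u::nat. u > 0 \<and> f = (\<Sum>i\<le>u. monom (int i + 1) i)"
proof -
  from assms(2) obtain \<sigma> where shape: "castelnuovo_shape (coeff f) \<sigma>"
    and nonneg: "\<And>n. 0 \<le> coeff f n"
    unfolding castelnuovo_poly_def castelnuovo_fun_iff_shape by blast
  have "\<sigma> \<noteq> 0"
  proof
    assume "\<sigma> = 0"
    with shape have "lead_coeff f \<le> 0" using castelnuovo_shape_0_nonpos by blast
    with nonneg[of "degree f"] assms(1) show False by simp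
  qed
  have "degree f < \<sigma>"
  proof (rule ccontr)
    assume "\<not> degree f < \<sigma>"
    with assms(1,2) shape \<open>\<sigma> \<noteq> 0\<close>
    have "castelnuovo_poly (f - monom 1 (degree f - 1) - monom 1 (degree f))"
      by (intro castelnuovo_poly_drop_top_two) auto
    with assms(4) show False by contradiction
  qed
  with shape assms(3) show ?thesis
    using castelnuovo_shape_beyond_degree_imp_eq_sum_monom by blast
qed

end
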